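(* For every integer $d\ge 8$ there exist proper subspaces $C,C'\subsetneq\mathbb{F}_2^d$ such that $C$ is integrally non-degenerate, $\mathbf 1=(1,\dots,1)\in C$, and $\mathbf x\times\mathbf y\in C'$ for all $\mathbf x,\mathbf y\in C$.
   Context: For $\mathbf v,\mathbf w\in\mathbb{F}_2^d$, $\mathbf v\times\mathbf w=(v_1w_1,\dots,v_dw_d)$. Define $B:\mathbb{Z}^d\times\mathbb{F}_2^d\to\mathbb{Z}$ by $B(\mathbf n,\mathbf v)=\sum_{i:\,v_i=1}n_i$. A subspace $C\subset\mathbb{F}_2^d$ is integrally non-degenerate if for every nonzero $\mathbf n\in\mathbb{Z}^d$ there is $\mathbf v\in C$ with $B(\mathbf n,\mathbf v)\neq 0$. *)

theory Defs
  imports Main "HOL-Library.Z2"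
begin

text \<open>Vectors of F_2^d are represented as functions nat => bit, coordinates indexed by
 0..d-1 and required to vanish outside {0..<d}.\<close>

definition F2vecs :: "nat \<Rightarrow> (nat \<Rightarrow> bit) set" where
  "F2vecs d = {v. \<forall>i. d \<le> i \<longrightarrow> v i = 0}"

definition F2subspace :: "nat \<Rightarrow> (nat \<Rightarrow> bit) set \<Rightarrow> bool" where
  "F2subspace d C \<longleftrightarrow> C \<subseteq> F2vecs d \<and> (\<lambda>_. 0) \<in> C
     \<and> (\<forall>x\<in>C. \<forall>y\<in>C. (\<lambda>i. x i + y i) \<in> C)
     \<and> (\<forall>c::bit. \<forall>x\<in>C. (\<lambda>i. c * x i) \<in> C)"

definition F2times :: "(nat \<Rightarrow> bit) \<Rightarrow> (nat \<Rightarrow> bit) \<Rightarrow> (nat \<Rightarrow> bit)" where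
  "F2times v w = (\<lambda>i. v i * w i)"

definition F2ones :: "nat \<Rightarrow> (nat \<Rightarrow> bit)" where
  "F2ones d = (\<lambda>i. if i < d then 1 else 0)"

definition Bpair :: "nat \<Rightarrow> (nat \<Rightarrow> int) \<Rightarrow> (nat \<Rightarrow> bit) \<Rightarrow> int" where
  "Bpair d n v = (\<Sum>i\<in>{i. i < d \<and> v i = 1}. n i)"

definition integrally_nondegenerate :: "nat \<Rightarrow> (nat \<Rightarrow> bit) set \<Rightarrow> bool" where
  "integrally_nondegenerate d C \<longleftrightarrow>
     (\<forall>n::nat \<Rightarrow> int. (\<exists>i<d. n i \<noteq> 0) \<longrightarrow> (\<exists>v\<in>C. Bpair d n v \<noteq> 0))"

end

theory Submission
  imports Defs "HOL-Library.Indicator_Function"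
begin

text \<open>Let C consist of the vectors whose first eight coordinates form a word of the
 extended Hamming code of length 8 (the other coordinates being free), and let C' consist of
 the vectors of even weight on the first eight coordinates. The extended Hamming code is
 self-dual, so the coordinatewise product of two words of C has even weight there and lies
 in C'. Every parity check has even weight, so the all-ones vector lies in C. Finally C is
 integrally non-degenerate because it contains the unit vectors e_i for i \<ge> 8 and eight
 Hamming codewords whose incidence matrix is nonsingular over the rationals.\<close>

definition F2dot :: "nat \<Rightarrow> (nat \<Rightarrow> bit) \<Rightarrow> (nat \<Rightarrow> bit) \<Rightarrow> bit" where
  "F2dot d v w = (\<Sum>i<d. v i * w i)"

definition F2orth :: "nat \<Rightarrow> (nat \<Rightarrow> bit) set \<Rightarrow> (nat \<Rightarrow> bit) set" where
  "F2orth d H = {v \<in> F2vecs d. \<forall>w\<in>H. F2dot d v w = 0}"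

lemma F2dot_add_left: "F2dot d (\<lambda>i. x i + y i) w = F2dot d x w + F2dot d y w"
  by (simp only: F2dot_def distrib_right sum.distrib)

lemma F2dot_scale_left: "F2dot d (\<lambda>i. c * x i) w = c * F2dot d x w"
  by (simp only: F2dot_def sum_distrib_left mult.assoc)

lemma F2dot_zero_left: "F2dot d (\<lambda>_. 0) w = 0"
  by (simp add: F2dot_def)

lemma F2dot_indicator_right:
  assumes "S \<subseteq> {..<d}"
  shows "F2dot d v (indicator S) = (\<Sum>i\<in>S. v i)"
proof -
  have "F2dot d v (indicator S) = (\<Sum>i\<in>{..<d} \<inter> S. v i)"
    unfolding F2dot_def by (simp add: indicator_def sum.inter_restrict del: mult_bit_eq_and)
  also have "{..<d} \<inter> S = S" using assms by blast
  finally show ?thesis .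
qed

lemma F2dot_indicator_indicator:
  assumes "S \<subseteq> {..<d}" "T \<subseteq> {..<d}"
  shows "F2dot d (indicator S) (indicator T) = of_nat (card (S \<inter> T))"
proof -
  have "finite T" using assms(2) finite_subset by blast
  then show ?thesis
    using assms(2) by (simp add: F2dot_indicator_right indicator_def Int_commute Int_def)
qed

lemma F2subspace_F2orth: "F2subspace d (F2orth d H)"
  unfolding F2subspace_def F2orth_def F2vecs_def
  by (auto simp: F2dot_add_left F2dot_scale_left F2dot_zero_left
      simp del: add_bit_eq_xor mult_bit_eq_and)

lemma F2orth_neq_F2vecs:
  assumes "w \<in> H" "i < d" "w i = 1"
  shows "F2orth d H \<noteq> F2vecs d"
proof
  assume "F2orth d H = F2vecs d"
  moreover have "indicator {i} \<in> F2vecs d"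
    using assms(2) by (simp add: F2vecs_def indicator_def)
  ultimately have "F2dot d (indicator {i}) w = 0"
    using assms(1) by (auto simp: F2orth_def)
  moreover have "F2dot d (indicator {i}) w = w i"
    using assms(2) by (simp add: F2dot_def indicator_def if_distrib sum.If_cases del: mult_bit_eq_and)
  ultimately show False using assms(3) by simp
qed

lemma of_nat_bit_even: "even n \<Longrightarrow> (of_nat n :: bit) = 0"
  by (elim evenE) simp

lemma indicator_mem_F2orth:
  assumes "S \<subseteq> {..<d}" and "\<And>T. T \<in> H \<Longrightarrow> T \<subseteq> {..<d} \<and> even (card (S \<inter> T))"
  shows "indicator S \<in> F2orth d (indicator ` H)"
  using assms by (auto simp: F2orth_def F2vecs_def indicator_def F2dot_indicator_indicator of_nat_bit_even)

lemma mem_F2orth_indicator_image_iff: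
  assumes "\<And>T. T \<in> H \<Longrightarrow> T \<subseteq> {..<d}"
  shows "v \<in> F2orth d (indicator ` H) \<longleftrightarrow> v \<in> F2vecs d \<and> (\<forall>T\<in>H. (\<Sum>i\<in>T. v i) = 0)"
  using assms by (auto simp: F2orth_def F2dot_indicator_right)

lemma Bpair_indicator:
  assumes "S \<subseteq> {..<d}"
  shows "Bpair d n (indicator S) = sum n S"
proof -
  have "{i. i < d \<and> indicator S i = (1::bit)} = S"
    using assms by (auto simp: indicator_def)
  then show ?thesis by (simp add: Bpair_def)
qed

lemma integrally_nondegenerateI:
  assumes "\<And>S. S \<in> \<S> \<Longrightarrow> S \<subseteq> {..<d} \<and> indicator S \<in> C"
    and "\<And>(n :: nat \<Rightarrow> int) i. (\<And>S. S \<in> \<S> \<Longrightarrow> sum n S = 0) \<Longrightarrow> i < d \<Longrightarrow> n i = 0"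
  shows "integrally_nondegenerate d C"
  unfolding integrally_nondegenerate_def
proof (intro allI impI)
  fix n :: "nat \<Rightarrow> int"
  assume "\<exists>i<d. n i \<noteq> 0"
  then obtain i where "i < d" "n i \<noteq> 0" by blast
  then have "\<exists>S\<in>\<S>. sum n S \<noteq> 0" using assms(2)[of n i] by blast
  then show "\<exists>v\<in>C. Bpair d n v \<noteq> 0" using assms(1) Bpair_indicator by metis
qed

lemma sum_lessThan_eight:
  fixes f :: "nat \<Rightarrow> 'a::comm_monoid_add"
  shows "(\<Sum>i<8. f i) = f 0 + f 1 + f 2 + f 3 + f 4 + f 5 + f 6 + f 7"
  by (simp add: eval_nat_numeral)

definition hamming8_checks :: "nat set set" where
  "hamming8_checks = {{0,1,2,3}, {2,3,4,5}, {4,5,6,7}, {0,2,4,6}}"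

lemma hamming8_checks_subset: "T \<in> hamming8_checks \<Longrightarrow> T \<subseteq> {..<8}"
  by (auto simp: hamming8_checks_def)

lemma hamming8_parametrization:
  fixes x :: "nat \<Rightarrow> bit"
  assumes "\<forall>S\<in>hamming8_checks. (\<Sum>i\<in>S. x i) = 0"
  shows "x 3 = x 0 + x 1 + x 2 \<and> x 5 = x 0 + x 1 + x 4 \<and> x 6 = x 0 + x 2 + x 4 \<and> x 7 = x 1 + x 2 + x 4"
proof -
  have "x 0 + x 1 + x 2 + x 3 = 0" "x 2 + x 3 + x 4 + x 5 = 0"
    "x 4 + x 5 + x 6 + x 7 = 0" "x 0 + x 2 + x 4 + x 6 = 0"
    using assms by (simp_all add: hamming8_checks_def add.assoc del: add_bit_eq_xor)
  then show ?thesis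
    by (cases "x 0"; cases "x 1"; cases "x 2"; cases "x 3";
        cases "x 4"; cases "x 5"; cases "x 6"; cases "x 7") simp_all
qed

lemma hamming8_self_orthogonal:
  fixes x y :: "nat \<Rightarrow> bit"
  assumes "\<forall>S\<in>hamming8_checks. (\<Sum>i\<in>S. x i) = 0"
    and "\<forall>S\<in>hamming8_checks. (\<Sum>i\<in>S. y i) = 0"
  shows "(\<Sum>i<8. x i * y i) = 0"
  unfolding sum_lessThan_eight
  using hamming8_parametrization[OF assms(1)] hamming8_parametrization[OF assms(2)]
  by (cases "x 0"; cases "x 1"; cases "x 2"; cases "x 4";
      cases "y 0"; cases "y 1"; cases "y 2"; cases "y 4") simp_all

text \<open>The 0/1 incidence matrix of these eight codewords is nonsingular over the rationals.\<close>

definition hamming8_test_words :: "nat set set" where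
  "hamming8_test_words = {{1,2,5,6}, {0,2,5,7}, {0,3,5,6}, {0,1,2,3,4,5,6,7},
     {0,1,2,3}, {1,3,5,7}, {0,1,4,5}, {2,3,4,5}}"

lemma hamming8_test_words_subset:
  "S \<in> hamming8_test_words \<Longrightarrow> S \<subseteq> {..<8}"
  by (auto simp: hamming8_test_words_def)

lemma hamming8_test_words_even_intersections:
  "S \<in> hamming8_test_words \<Longrightarrow> T \<in> hamming8_checks \<Longrightarrow> even (card (S \<inter> T))"
  by (auto simp: hamming8_test_words_def hamming8_checks_def)

lemma hamming8_test_words_sums_eq_0:
  fixes n :: "nat \<Rightarrow> int"
  assumes "\<forall>S\<in>hamming8_test_words. sum n S = 0" and "i < 8"
  shows "n i = 0"
proof -
  have "n 0 = 0 \<and> n 1 = 0 \<and> n 2 = 0 \<and> n 3 = 0 \<and> n 4 = 0 \<and> n 5 = 0 \<and> n 6 = 0 \<and> n 7 = 0"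
    using assms(1) by (simp add: hamming8_test_words_def)
  moreover have "i \<in> {0,1,2,3,4,5,6,7}"
    using assms(2) by (auto simp: eval_nat_numeral less_Suc_eq)
  ultimately show ?thesis by auto
qed

lemma hamming8_nondegenerate:
  assumes "8 \<le> d"
  shows "integrally_nondegenerate d (F2orth d (indicator ` hamming8_checks))"
proof -
  define \<S> where "\<S> = hamming8_test_words \<union> {{i} | i. 8 \<le> i \<and> i < d}"
  show ?thesis
  proof (rule integrally_nondegenerateI[of \<S>])
    fix S assume "S \<in> \<S>"
    moreover have "T \<subseteq> {..<d}" if "T \<in> hamming8_checks" for T
      using hamming8_checks_subset[OF that] assms by auto
    moreover have "S \<inter> T = {}" if "S \<in> {{i} | i. 8 \<le> i \<and> i < d}" "T \<in> hamming8_checks" for T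
      using that hamming8_checks_subset by fastforce
    ultimately show "S \<subseteq> {..<d} \<and> indicator S \<in> F2orth d (indicator ` hamming8_checks)"
      using assms hamming8_test_words_subset hamming8_test_words_even_intersections
      unfolding \<S>_def by (fastforce intro!: indicator_mem_F2orth)
  next
    fix n :: "nat \<Rightarrow> int" and i
    assume sums: "\<And>S. S \<in> \<S> \<Longrightarrow> sum n S = 0" and "i < d"
    show "n i = 0"
    proof (cases "i < 8")
      case True
      then show ?thesis using sums hamming8_test_words_sums_eq_0 unfolding \<S>_def by blast
    next
      case False
      then show ?thesis using sums[of "{i}"] \<open>i < d\<close> unfolding \<S>_def by auto
    qed
  qed
qed

lemma hamming8_products:
  assumes "8 \<le> d"
    and "x \<in> F2orth d (indicator ` hamming8_checks)" "y \<in> F2orth d (indicator ` hamming8_checks)"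
  shows "F2times x y \<in> F2orth d {indicator {..<8}}"
proof -
  have checks_below_d: "T \<subseteq> {..<d}" if "T \<in> hamming8_checks" for T
    using hamming8_checks_subset[OF that] assms(1) by auto
  have "(\<Sum>i<8. x i * y i) = 0"
    using assms(2,3)
    by (intro hamming8_self_orthogonal) (simp_all add: mem_F2orth_indicator_image_iff[OF checks_below_d])
  moreover have "F2times x y \<in> F2vecs d"
    using assms(2) by (simp add: F2orth_def F2vecs_def F2times_def)
  ultimately show ?thesis
    using assms(1) mem_F2orth_indicator_image_iff[of "{{..<8}}" d "F2times x y"]
    by (auto simp: F2times_def)
qed

theorem proposition3p2:
  fixes d :: nat
  assumes "d \<ge> 8"
  shows "\<exists>C C'. F2subspace d C \<and> C \<noteq> F2vecs d \<and> F2subspace d C' \<and> C' \<noteq> F2vecs d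
           \<and> integrally_nondegenerate d C \<and> F2ones d \<in> C
           \<and> (\<forall>x\<in>C. \<forall>y\<in>C. F2times x y \<in> C')"
proof (intro exI conjI ballI)
  let ?C = "F2orth d (indicator ` hamming8_checks)" and ?C' = "F2orth d {indicator {..<8}}"
  show "F2subspace d ?C" "F2subspace d ?C'"
    by (rule F2subspace_F2orth)+
  show "?C \<noteq> F2vecs d"
    using assms
    by (intro F2orth_neq_F2vecs[of "indicator {0,1,2,3}" _ 0]) (auto simp: hamming8_checks_def)
  show "?C' \<noteq> F2vecs d"
    using assms by (intro F2orth_neq_F2vecs[of "indicator {..<8}" _ 0]) auto
  show "integrally_nondegenerate d ?C"
    using assms by (rule hamming8_nondegenerate)
  have "F2ones d = indicator {..<d}"
    by (auto simp: F2ones_def indicator_def)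
  also have "\<dots> \<in> ?C"
    using assms hamming8_checks_subset
    by (intro indicator_mem_F2orth) (fastforce simp: hamming8_checks_def)+
  finally show "F2ones d \<in> ?C" .
  show "F2times x y \<in> ?C'" if "x \<in> ?C" "y \<in> ?C" for x y
    using assms that by (rule hamming8_products)
qed

end
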